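(* Let $h>0$, let $B\subset\mathbb Z^8_h$ be bounded, and let $f:\overline B\to\mathbb O$. Then $$\int_{\partial B}\mathbf n\,f\,dS=\int_B D^hf\,dV^h,\qquad \int_{\partial B}f\,\mathbf n\,dS=\int_B f D^h\,dV^h,$$ where $D^hf=\sum_{l=0}^7\mathbf e_l\,\partial_l^hf$ and $fD^h=\sum_{l=0}^7(\partial_l^hf)\,\mathbf e_l$.
   Context: $\mathbb O$ is the real octonion algebra with standard basis $\mathbf e_0=1,\mathbf e_1,\dots,\mathbf e_7$. For $h>0$, $\mathbb Z^8_h=(h\mathbb Z)^8\subset\mathbb R^8$, and $e_0,\dots,e_7$ denote the standard unit vectors of $\mathbb R^8$. For $A\subset\mathbb Z^8_h$, $\chi_A$ is the indicator function of $A$. Difference operators: $\partial_l^{+,h}f(x)=(f(x+he_l)-f(x))/h$, $\partial_l^{-,h}f(x)=(f(x)-f(x-he_l))/h$, $\partial_l^h=\frac12(\partial_l^{+,h}+\partial_l^{-,h})$. Let $N(x)=\{x,x\pm he_0,\dots,x\pm he_7\}$. For $B\subset\mathbb Z^8_h$: $\partial B=\{x\in\mathbb Z^8_h:\ N(x)\cap B\neq\emptyset,\ N(x)\cap(\mathbb Z^8_h\setminus B)\neq\emptyset\}$, $\overline B=B\cup\partial B$. Volume integral: $\int_A g\,dV^h=\sum_{x\in A}g(x)h^8$. For $x\in\partial B$ put $\Sigma(x)=\sum_{l=0}^7\big[(\partial_l^{+,h}\chi_B(x))^2+(\partial_l^{-,h}\chi_B(x))^2\big]$ (nonzero on $\partial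 B$), $s(x)=\frac{h^8}{2}\sqrt{\Sigma(x)}$, $n_l^{\pm}(x)=-2\,\partial_l^{\pm,h}\chi_B(x)/\sqrt{\Sigma(x)}$, $\int_{\partial B}g\,dS=\sum_{x\in\partial B}g(x)s(x)$, and the octonionic outward normal is $\mathbf n=\sum_{l=0}^7\frac12(n_l^++n_l^-)\mathbf e_l$. *)

theory Defs
  imports Complex_Main
begin

text \<open>Octonions are represented by their coordinate functions nat => real w.r.t.
 the standard basis e_0 = 1, e_1, ..., e_7 (only coordinates 0..7 are meaningful).
 Multiplication table: the standard Cayley table given by the Fano-plane triples
 (1,2,3),(1,4,5),(1,7,6),(2,4,6),(2,5,7),(3,4,7),(3,6,5): e_i e_j = e_k for (i,j,k)
 a cyclic rotation of a triple, e_j e_i = - e_k, e_i e_i = -1 (i > 0), e_0 = 1.\<close>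

type_synonym octonion = "nat \<Rightarrow> real"

definition fano :: "(nat \<times> nat \<times> nat) list" where
  "fano = [(1,2,3),(1,4,5),(1,7,6),(2,4,6),(2,5,7),(3,4,7),(3,6,5)]"

definition fano_rel :: "nat \<Rightarrow> nat \<Rightarrow> nat \<Rightarrow> bool" where
  "fano_rel i j k = (\<exists>(a,b,c)\<in>set fano. (i,j,k) \<in> {(a,b,c),(b,c,a),(c,a,b)})"

definition oct_coeff :: "nat \<Rightarrow> nat \<Rightarrow> nat \<Rightarrow> real" where
  "oct_coeff i j k =
    (if i = 0 then (if j = k then 1 else 0)
     else if j = 0 then (if i = k then 1 else 0)
     else if i = j then (if k = 0 then -1 else 0)
     else if fano_rel i j k then 1
     else if fano_rel j i k then -1
     else 0)"

definition oct_mult :: "octonion \<Rightarrow> octonion \<Rightarrow> octonion" (infixl "\<otimes>\<^sub>O" 70) where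
  "x \<otimes>\<^sub>O y = (\<lambda>k. if k < 8 then (\<Sum>i<8. \<Sum>j<8. oct_coeff i j k * x i * y j) else 0)"

definition oct_add :: "octonion \<Rightarrow> octonion \<Rightarrow> octonion" where
  "oct_add x y = (\<lambda>k. x k + y k)"

definition oct_scale :: "real \<Rightarrow> octonion \<Rightarrow> octonion" where
  "oct_scale c x = (\<lambda>k. c * x k)"

definition oct_zero :: octonion where "oct_zero = (\<lambda>k. 0)"

definition oct_sum :: "('a \<Rightarrow> octonion) \<Rightarrow> 'a set \<Rightarrow> octonion" where
  "oct_sum g A = (\<lambda>k. \<Sum>a\<in>A. g a k)"

definition oct_e :: "nat \<Rightarrow> octonion" where
  "oct_e l = (\<lambda>k. if k = l then 1 else 0)"

text \<open>Points of R^8 are represented as functions nat => real vanishing outside 0..7.\<close>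
type_synonym point = "nat \<Rightarrow> real"

definition lattice :: "real \<Rightarrow> point set" where
  "lattice h = {x. (\<forall>l<8. \<exists>m::int. x l = h * of_int m) \<and> (\<forall>l\<ge>8. x l = 0)}"

definition shift :: "real \<Rightarrow> point \<Rightarrow> nat \<Rightarrow> real \<Rightarrow> point" where
  "shift h x l s = (\<lambda>k. x k + (if k = l then s * h else 0))"

definition nbhd :: "real \<Rightarrow> point \<Rightarrow> point set" where
  "nbhd h x = insert x ((\<lambda>l. shift h x l 1) ` {..<8} \<union> (\<lambda>l. shift h x l (-1)) ` {..<8})"

definition chi :: "point set \<Rightarrow> point \<Rightarrow> real" where
  "chi A x = (if x \<in> A then 1 else 0)"

definition dplus :: "real \<Rightarrow> (point \<Rightarrow> real) \<Rightarrow> nat \<Rightarrow> point \<Rightarrow> real" where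
  "dplus h g l x = (g (shift h x l 1) - g x) / h"

definition dminus :: "real \<Rightarrow> (point \<Rightarrow> real) \<Rightarrow> nat \<Rightarrow> point \<Rightarrow> real" where
  "dminus h g l x = (g x - g (shift h x l (-1))) / h"

definition dcent :: "real \<Rightarrow> (point \<Rightarrow> octonion) \<Rightarrow> nat \<Rightarrow> point \<Rightarrow> octonion" where
  "dcent h f l x = (\<lambda>k. ((f (shift h x l 1) k - f x k) / h + (f x k - f (shift h x l (-1)) k) / h) / 2)"

definition dboundary :: "real \<Rightarrow> point set \<Rightarrow> point set" where
  "dboundary h B = {x \<in> lattice h. nbhd h x \<inter> B \<noteq> {} \<and> nbhd h x \<inter> (lattice h - B) \<noteq> {}}"

definition Sigma_b :: "real \<Rightarrow> point set \<Rightarrow> point \<Rightarrow> real" where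
  "Sigma_b h B x = (\<Sum>l<8. (dplus h (chi B) l x)\<^sup>2 + (dminus h (chi B) l x)\<^sup>2)"

definition surf_s :: "real \<Rightarrow> point set \<Rightarrow> point \<Rightarrow> real" where
  "surf_s h B x = h ^ 8 / 2 * sqrt (Sigma_b h B x)"

definition n_plus :: "real \<Rightarrow> point set \<Rightarrow> nat \<Rightarrow> point \<Rightarrow> real" where
  "n_plus h B l x = - 2 * dplus h (chi B) l x / sqrt (Sigma_b h B x)"

definition n_minus :: "real \<Rightarrow> point set \<Rightarrow> nat \<Rightarrow> point \<Rightarrow> real" where
  "n_minus h B l x = - 2 * dminus h (chi B) l x / sqrt (Sigma_b h B x)"

definition onormal :: "real \<Rightarrow> point set \<Rightarrow> point \<Rightarrow> octonion" where
  "onormal h B x = oct_sum (\<lambda>l. oct_scale ((n_plus h B l x + n_minus h B l x) / 2) (oct_e l)) {..<8}"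

definition surf_int :: "real \<Rightarrow> point set \<Rightarrow> (point \<Rightarrow> octonion) \<Rightarrow> octonion" where
  "surf_int h B g = oct_sum (\<lambda>x. oct_scale (surf_s h B x) (g x)) (dboundary h B)"

definition vol_int :: "real \<Rightarrow> point set \<Rightarrow> (point \<Rightarrow> octonion) \<Rightarrow> octonion" where
  "vol_int h A g = oct_sum (\<lambda>x. oct_scale (h ^ 8) (g x)) A"

definition Dleft :: "real \<Rightarrow> (point \<Rightarrow> octonion) \<Rightarrow> point \<Rightarrow> octonion" where
  "Dleft h f x = oct_sum (\<lambda>l. oct_e l \<otimes>\<^sub>O dcent h f l x) {..<8}"

definition Dright :: "real \<Rightarrow> (point \<Rightarrow> octonion) \<Rightarrow> point \<Rightarrow> octonion" where
  "Dright h f x = oct_sum (\<lambda>l. dcent h f l x \<otimes>\<^sub>O oct_e l) {..<8}"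

end

theory Submission
  imports Defs "HOL-Library.FuncSet"
begin

text \<open>Both identities are discrete summation by parts. The square root in the normal cancels
  against the surface element, so that s(x) n_l(x) = h^7/2 (\<chi>_B(x - h e_l) - \<chi>_B(x + h e_l)).
  Shifting the sum over B by \<plusminus>h e_l turns the volume integral of a central difference into a
  sum over the closure of B weighted by exactly these jumps, and the jumps vanish at points
  of B that are not boundary points. Since the octonion product is bilinear (associativity is
  never used), each coordinate of both identities reduces to this scalar statement applied to
  T_l = (e_l f)_k, respectively T_l = (f e_l)_k.\<close>

lemma shift_shift_inverse [simp]: "shift h (shift h x l s) l (-s) = x"
  by (rule ext) (simp add: shift_def)

lemma shift_in_lattice:
  assumes "x \<in> lattice h" "l < 8" "s = 1 \<or> s = -1"
  shows "shift h x l s \<in> lattice h"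
  unfolding lattice_def mem_Collect_eq
proof (intro conjI allI impI)
  fix k :: nat assume "k < 8"
  then obtain m :: int where m: "x k = h * of_int m"
    using assms(1) unfolding lattice_def by blast
  have "shift h x l s k = h * of_int (m + (if k = l then (if s = 1 then 1 else -1) else 0))"
    using m assms(3) by (auto simp: shift_def algebra_simps)
  then show "\<exists>m::int. shift h x l s k = h * of_int m" ..
next
  fix k :: nat assume "8 \<le> k"
  then show "shift h x l s k = 0" using assms unfolding lattice_def shift_def by auto
qed

lemma shift_in_nbhd: "l < 8 \<Longrightarrow> s = 1 \<or> s = -1 \<Longrightarrow> shift h x l s \<in> nbhd h x"
  unfolding nbhd_def by auto

lemma finite_nbhd: "finite (nbhd h x)"
  unfolding nbhd_def by auto

lemma nbhd_sym: "z \<in> nbhd h x \<Longrightarrow> x \<in> nbhd h z"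
proof -
  assume "z \<in> nbhd h x"
  then consider "z = x" | l s where "l < 8" "s = 1 \<or> s = -1" "z = shift h x l s"
    unfolding nbhd_def by blast
  then show ?thesis
  proof cases
    case (2 l s)
    then show ?thesis
      using shift_in_nbhd[of l "-s" h z] by (metis minus_minus shift_shift_inverse)
  qed (simp add: nbhd_def)
qed

lemma finite_dboundary: "finite B \<Longrightarrow> finite (dboundary h B)"
proof -
  assume "finite B"
  moreover have "dboundary h B \<subseteq> (\<Union>z\<in>B. nbhd h z)"
    unfolding dboundary_def using nbhd_sym by blast
  ultimately show ?thesis using finite_nbhd by (meson finite_UN_I finite_subset)
qed

lemma lattice_coordinate:
  assumes "h > 0" "x \<in> lattice h" "l < 8"
  shows "x l = h * of_int \<lfloor>x l / h\<rfloor>"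
proof -
  obtain m :: int where "x l = h * of_int m" using assms(2,3) unfolding lattice_def by blast
  then show ?thesis using assms(1) by simp
qed

lemma finite_bounded_lattice_subset:
  assumes h: "h > 0" and B: "B \<subseteq> lattice h" and R: "\<forall>x\<in>B. \<forall>l. \<bar>x l\<bar> \<le> R"
  shows "finite B"
proof -
  define N where "N = \<lceil>R / h\<rceil>"
  define code where "code x = restrict (\<lambda>l. \<lfloor>x l / h\<rfloor>) {..<8}" for x :: point
  have "inj_on code B"
  proof (rule inj_onI, rule ext)
    fix x y l assume x: "x \<in> B" and y: "y \<in> B" and eq: "code x = code y"
    show "x l = y l"
    proof (cases "l < 8")
      case True
      then have "\<lfloor>x l / h\<rfloor> = \<lfloor>y l / h\<rfloor>" using fun_cong[OF eq, of l] by (simp add: code_def)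
      then show ?thesis using lattice_coordinate[OF h _ True] x y B by (metis subsetD)
    next
      case False
      moreover have "x \<in> lattice h" "y \<in> lattice h" using x y B by auto
      ultimately show ?thesis unfolding lattice_def by simp
    qed
  qed
  moreover have "code ` B \<subseteq> PiE {..<8} (\<lambda>_. {-N..N})"
  proof (clarsimp simp: code_def)
    fix x l assume "x \<in> B" "l < (8::nat)"
    then have "\<bar>x l / h\<bar> \<le> R / h" using R h by (simp add: divide_right_mono)
    then show "- N \<le> \<lfloor>x l / h\<rfloor> \<and> \<lfloor>x l / h\<rfloor> \<le> N"
      unfolding N_def by linarith
  qed
  ultimately show ?thesis by (rule inj_on_finite) (simp add: finite_PiE)
qed

lemma sum_shift_eq_sum_closure:
  assumes fin: "finite B" and B: "B \<subseteq> lattice h" and l: "l < 8" and s: "s = 1 \<or> s = -1"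
  shows "(\<Sum>x\<in>B. g (shift h x l s)) = (\<Sum>y\<in>B \<union> dboundary h B. chi B (shift h y l (-s)) * g y)"
proof -
  let ?\<sigma> = "\<lambda>x. shift h x l s"
  have image_closure: "?\<sigma> ` B \<subseteq> B \<union> dboundary h B"
  proof clarify
    fix x assume x: "x \<in> B" "?\<sigma> x \<notin> dboundary h B"
    have "shift h (?\<sigma> x) l (-s) \<in> nbhd h (?\<sigma> x)" using s by (intro shift_in_nbhd[OF l]) auto
    then have "x \<in> nbhd h (?\<sigma> x)" by simp
    moreover have "?\<sigma> x \<in> nbhd h (?\<sigma> x)" unfolding nbhd_def by simp
    ultimately show "?\<sigma> x \<in> B"
      using x B shift_in_lattice[OF _ l s] unfolding dboundary_def by blast
  qed
  have preimage: "y \<in> ?\<sigma> ` B \<longleftrightarrow> shift h y l (-s) \<in> B" for y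
  proof
    show "shift h y l (-s) \<in> B \<Longrightarrow> y \<in> ?\<sigma> ` B"
      using shift_shift_inverse[of h y l "-s"] by (simp add: rev_image_eqI)
  qed auto
  have "inj_on ?\<sigma> B"
    by (rule inj_onI) (metis shift_shift_inverse)
  then have "(\<Sum>x\<in>B. g (?\<sigma> x)) = sum g ((B \<union> dboundary h B) \<inter> ?\<sigma> ` B)"
    using image_closure by (simp add: sum.reindex Int_absorb1)
  also have "\<dots> = (\<Sum>y\<in>B \<union> dboundary h B. if y \<in> ?\<sigma> ` B then g y else 0)"
    using fin finite_dboundary by (intro sum.inter_restrict) auto
  also have "\<dots> = (\<Sum>y\<in>B \<union> dboundary h B. chi B (shift h y l (-s)) * g y)"
    by (simp add: preimage chi_def if_distrib[of "\<lambda>c. c * _"] cong: if_cong)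
  finally show ?thesis .
qed

definition outward_jump :: "real \<Rightarrow> point set \<Rightarrow> nat \<Rightarrow> point \<Rightarrow> real" where
  "outward_jump h B l x = chi B (shift h x l (-1)) - chi B (shift h x l 1)"

lemma outward_jump_interior:
  assumes B: "B \<subseteq> lattice h" and y: "y \<in> B" "y \<notin> dboundary h B" and l: "l < 8"
  shows "outward_jump h B l y = 0"
proof -
  have "y \<in> nbhd h y \<inter> B" using y unfolding nbhd_def by simp
  then have "nbhd h y \<inter> (lattice h - B) = {}" using y B unfolding dboundary_def by blast
  then have "shift h y l s \<in> B" if "s = 1 \<or> s = -1" for s
    using that y B shift_in_nbhd[OF l] shift_in_lattice[OF _ l] by blast
  then show ?thesis by (simp add: outward_jump_def chi_def)
qed

lemma onormal_coordinate:
  assumes "i < 8"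
  shows "onormal h B x i = (n_plus h B i x + n_minus h B i x) / 2"
proof -
  have "onormal h B x i = (\<Sum>l<8. if l = i then (n_plus h B l x + n_minus h B l x) / 2 else 0)"
    unfolding onormal_def oct_sum_def oct_scale_def oct_e_def by (intro sum.cong) auto
  then show ?thesis using assms by simp
qed

lemma surf_s_mult_onormal:
  assumes h: "h > 0" and i: "i < 8"
  shows "surf_s h B x * onormal h B x i = h ^ 7 / 2 * outward_jump h B i x"
proof -
  have jump: "outward_jump h B i x = - h * (dplus h (chi B) i x + dminus h (chi B) i x)"
    unfolding dplus_def dminus_def outward_jump_def using h by (simp add: field_simps)
  show ?thesis
  proof (cases "Sigma_b h B x = 0")
    case True
    txt \<open>Then n_l(x) = 0 by the convention u / 0 = 0, and both sides vanish.\<close>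
    have "(dplus h (chi B) i x)\<^sup>2 + (dminus h (chi B) i x)\<^sup>2 \<le> Sigma_b h B x"
      unfolding Sigma_b_def using i by (intro member_le_sum) auto
    then have "dplus h (chi B) i x = 0" "dminus h (chi B) i x = 0"
      using True by (smt (verit) zero_le_power2 zero_eq_power2)+
    then show ?thesis using True jump by (simp add: surf_s_def)
  next
    case False
    then have "sqrt (Sigma_b h B x) \<noteq> 0" by simp
    then show ?thesis
      unfolding onormal_coordinate[OF i] surf_s_def n_plus_def n_minus_def jump
      using h by (simp add: field_simps power_eq_if)
  qed
qed

theorem discrete_divergence_theorem:
  fixes T :: "nat \<Rightarrow> point \<Rightarrow> real"
  assumes h: "h > 0" and fin: "finite B" and B: "B \<subseteq> lattice h"
  shows "(\<Sum>x\<in>dboundary h B. surf_s h B x * (\<Sum>l<8. onormal h B x l * T l x))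
       = (\<Sum>x\<in>B. h ^ 8 * (\<Sum>l<8. (T l (shift h x l 1) - T l (shift h x l (-1))) / (2 * h)))"
proof -
  let ?S = "B \<union> dboundary h B"
  have "(\<Sum>x\<in>dboundary h B. surf_s h B x * (\<Sum>l<8. onormal h B x l * T l x))
      = (\<Sum>x\<in>dboundary h B. \<Sum>l<8. h ^ 7 / 2 * (outward_jump h B l x * T l x))"
    by (simp add: sum_distrib_left mult.assoc[symmetric] surf_s_mult_onormal[OF h])
  also have "\<dots> = (\<Sum>x\<in>?S. \<Sum>l<8. h ^ 7 / 2 * (outward_jump h B l x * T l x))"
    using fin finite_dboundary outward_jump_interior[OF B]
    by (intro sum.mono_neutral_left) auto
  also have "\<dots> = (\<Sum>l<8. h ^ 7 / 2 * (\<Sum>x\<in>?S. outward_jump h B l x * T l x))"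
    by (subst sum.swap) (simp add: sum_distrib_left)
  also have "\<dots> = (\<Sum>l<8. h ^ 7 / 2 * ((\<Sum>x\<in>B. T l (shift h x l 1)) - (\<Sum>x\<in>B. T l (shift h x l (-1)))))"
    using sum_shift_eq_sum_closure[OF fin B, of _ 1] sum_shift_eq_sum_closure[OF fin B, of _ "-1"]
    by (simp add: outward_jump_def left_diff_distrib sum_subtractf)
  also have "\<dots> = (\<Sum>l<8. \<Sum>x\<in>B. h ^ 7 / 2 * (T l (shift h x l 1) - T l (shift h x l (-1))))"
    by (simp add: sum_distrib_left sum_subtractf right_diff_distrib)
  also have "\<dots> = (\<Sum>x\<in>B. h ^ 8 * (\<Sum>l<8. (T l (shift h x l 1) - T l (shift h x l (-1))) / (2 * h)))"
  proof -
    have scale: "h ^ 8 * (d / (2 * h)) = h ^ 7 / 2 * d" for d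
      using h by (simp add: eval_nat_numeral field_simps)
    show ?thesis by (subst sum.swap) (simp only: sum_distrib_left scale)
  qed
  finally show ?thesis .
qed

lemma oct_e_mult:
  assumes "i < 8"
  shows "(oct_e i \<otimes>\<^sub>O y) k = (if k < 8 then (\<Sum>j<8. oct_coeff i j k * y j) else 0)"
proof -
  have "(\<Sum>i'<8. \<Sum>j<8. oct_coeff i' j k * oct_e i i' * y j)
      = (\<Sum>i'<8. if i' = i then (\<Sum>j<8. oct_coeff i j k * y j) else 0)"
    by (intro sum.cong) (auto simp: oct_e_def)
  then show ?thesis using assms by (simp add: oct_mult_def)
qed

lemma mult_oct_e:
  assumes "j < 8"
  shows "(y \<otimes>\<^sub>O oct_e j) k = (if k < 8 then (\<Sum>i<8. oct_coeff i j k * y i) else 0)"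
proof -
  have "(\<Sum>j'<8. oct_coeff i j' k * y i * oct_e j j') = oct_coeff i j k * y i" for i
    using assms by (simp add: oct_e_def if_distrib[of "\<lambda>t. _ * t"] cong: if_cong)
  then show ?thesis by (simp add: oct_mult_def)
qed

lemma oct_mult_expand_left: "(a \<otimes>\<^sub>O y) k = (\<Sum>i<8. a i * (oct_e i \<otimes>\<^sub>O y) k)"
  by (simp add: oct_e_mult oct_mult_def[of a y] sum_distrib_left mult_ac)

lemma oct_mult_expand_right: "(y \<otimes>\<^sub>O a) k = (\<Sum>j<8. a j * (y \<otimes>\<^sub>O oct_e j) k)"
proof -
  have "(y \<otimes>\<^sub>O a) k = (if k < 8 then (\<Sum>j<8. \<Sum>i<8. oct_coeff i j k * y i * a j) else 0)"
    unfolding oct_mult_def by (subst sum.swap) simp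
  then show ?thesis by (simp add: mult_oct_e sum_distrib_left mult_ac)
qed

lemma oct_mult_diff_quotient_right:
  "a \<otimes>\<^sub>O (\<lambda>k. (u k - v k) / c) = (\<lambda>k. ((a \<otimes>\<^sub>O u) k - (a \<otimes>\<^sub>O v) k) / c)"
  unfolding oct_mult_def
  by (rule ext) (simp add: sum_subtractf sum_divide_distrib right_diff_distrib diff_divide_distrib)

lemma oct_mult_diff_quotient_left:
  "(\<lambda>k. (u k - v k) / c) \<otimes>\<^sub>O a = (\<lambda>k. ((u \<otimes>\<^sub>O a) k - (v \<otimes>\<^sub>O a) k) / c)"
  unfolding oct_mult_def
  by (rule ext)
    (simp add: sum_subtractf sum_divide_distrib right_diff_distrib left_diff_distrib diff_divide_distrib)

lemma dcent_altdef: "h \<noteq> 0 \<Longrightarrow> dcent h f l x = (\<lambda>k. (f (shift h x l 1) k - f (shift h x l (-1)) k) / (2 * h))"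
  by (simp add: dcent_def field_simps)

lemma Dleft_coordinate: "h \<noteq> 0 \<Longrightarrow>
  Dleft h f x k = (\<Sum>l<8. ((oct_e l \<otimes>\<^sub>O f (shift h x l 1)) k - (oct_e l \<otimes>\<^sub>O f (shift h x l (-1))) k) / (2 * h))"
  by (simp add: Dleft_def oct_sum_def dcent_altdef oct_mult_diff_quotient_right)

lemma Dright_coordinate: "h \<noteq> 0 \<Longrightarrow>
  Dright h f x k = (\<Sum>l<8. ((f (shift h x l 1) \<otimes>\<^sub>O oct_e l) k - (f (shift h x l (-1)) \<otimes>\<^sub>O oct_e l) k) / (2 * h))"
  by (simp add: Dright_def oct_sum_def dcent_altdef oct_mult_diff_quotient_left)

theorem mainTheorem3:
  fixes h :: real and B :: "point set" and f :: "point \<Rightarrow> octonion"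
  assumes "h > 0"
    and "B \<subseteq> lattice h"
    and "\<exists>R. \<forall>x\<in>B. \<forall>l. \<bar>x l\<bar> \<le> R"
  shows "surf_int h B (\<lambda>x. onormal h B x \<otimes>\<^sub>O f x) = vol_int h B (Dleft h f) \<and>
         surf_int h B (\<lambda>x. f x \<otimes>\<^sub>O onormal h B x) = vol_int h B (Dright h f)"
proof -
  have h: "h > 0" "h \<noteq> 0" and B: "B \<subseteq> lattice h" using assms(1,2) by auto
  have fin: "finite B" using assms(3) finite_bounded_lattice_subset[OF h(1) B] by blast
  note divergence = discrete_divergence_theorem[OF h(1) fin B]
  have "surf_int h B (\<lambda>x. onormal h B x \<otimes>\<^sub>O f x) k = vol_int h B (Dleft h f) k" for k
  proof -
    have "(onormal h B x \<otimes>\<^sub>O f x) k = (\<Sum>l<8. onormal h B x l * (oct_e l \<otimes>\<^sub>O f x) k)" for x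
      by (rule oct_mult_expand_left)
    then show ?thesis using divergence[of "\<lambda>l y. (oct_e l \<otimes>\<^sub>O f y) k"]
      by (simp add: surf_int_def vol_int_def oct_sum_def oct_scale_def Dleft_coordinate[OF h(2)])
  qed
  moreover have "surf_int h B (\<lambda>x. f x \<otimes>\<^sub>O onormal h B x) k = vol_int h B (Dright h f) k" for k
  proof -
    have "(f x \<otimes>\<^sub>O onormal h B x) k = (\<Sum>l<8. onormal h B x l * (f x \<otimes>\<^sub>O oct_e l) k)" for x
      by (rule oct_mult_expand_right)
    then show ?thesis using divergence[of "\<lambda>l y. (f y \<otimes>\<^sub>O oct_e l) k"]
      by (simp add: surf_int_def vol_int_def oct_sum_def oct_scale_def Dright_coordinate[OF h(2)])
  qed
  ultimately show ?thesis by blast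
qed

end
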